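(* Let $T$ be a split Leibniz triple system with symmetric root system $\Lambda^1$, suppose $\Lambda^0$ is symmetric, and fix $\alpha_0\in\Lambda^1$. Let $\alpha\in\Lambda^1_{\alpha_0}$ and $\beta,\gamma\in\Lambda^1\cup\{0\}$. Then: (1) if $\{T_\alpha,T_\beta,T_\gamma\}\neq0$ then $\beta,\gamma,\alpha+\beta+\gamma\in\Lambda^1_{\alpha_0}\cup\{0\}$; (2) if $\{T_\beta,T_\alpha,T_\gamma\}\neq0$ then $\beta,\gamma,\beta+\alpha+\gamma\in\Lambda^1_{\alpha_0}\cup\{0\}$; (3) if $\{T_\beta,T_\gamma,T_\alpha\}\neq0$ then $\beta,\gamma,\beta+\gamma+\alpha\in\Lambda^1_{\alpha_0}\cup\{0\}$.
   Context: A Leibniz triple system is a vector space $T$ over a field $\mathbb{K}$ with a trilinear product $\{\cdot,\cdot,\cdot\}$ satisfying, for all $a,b,c,d,e\in T$: $\{a,\{b,c,d\},e\}=\{\{a,b,c\},d,e\}-\{\{a,c,b\},d,e\}-\{\{a,d,b\},c,e\}+\{\{a,d,c\},b,e\}$ and $\{a,b,\{c,d,e\}\}=\{\{a,b,c\},d,e\}-\{\{a,b,d\},c,e\}-\{\{a,b,e\},c,d\}+\{\{a,b,e\},d,c\}$. Its standard embedding is the right Leibniz algebra $L=L^0\oplus L^1$ ($L^0$ the span of symbols $x\otimes y$, $L^1=T$) with product $[(x\otimes y,z),(u\otimes v,w)]=(\{x,y,u\}\otimes v-\{x,y,v\}\otimes u+z\otimes w,\ \{x,y,w\}+\{z,u,v\}-\{z,v,u\})$;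 so $[x,y]=x\otimes y$ and $\{x,y,z\}=[[x,y],z]$ for $x,y,z\in T$. Let $H^0$ be a maximal abelian subalgebra of $L^0$; for $\alpha\in(H^0)^*$ put $T_\alpha=\{t\in T:[t,h]=\alpha(h)t\ \forall h\in H^0\}$, $L^0_\alpha=\{v\in L^0:[v,h]=\alpha(h)v\ \forall h\in H^0\}$, $\Lambda^1=\{\alpha\neq0:T_\alpha\neq0\}$, $\Lambda^0=\{\alpha\neq0:L^0_\alpha\neq0\}$. $T$ is split (w.r.t. $H^0$) if $T=T_0\oplus\bigoplus_{\alpha\in\Lambda^1}T_\alpha$, $\{T_0,T_0,T_0\}=0$ and $\{T_\alpha,T_{-\alpha},T_0\}=0$ for all $\alpha\in\Lambda^1$. A set $\Lambda\subset(H^0)^*$ is symmetric if $\alpha\in\Lambda$ implies $-\alpha\in\Lambda$. Two roots $\alpha,\beta\in\Lambda^1$ are connected if there is a family $\alpha_1,\dots,\alpha_{2n+1}\in\Lambda^1\cup\{0\}$ with: $\alpha_1+\dots+\alpha_{2k+1}\in\Lambda^1$ for $k=0,\dots,n$; $\alpha_1+\dots+\alpha_{2k}\in\Lambda^0$ for $k=1,\dots,n$; $\alpha_1=\alpha$ and $\alpha_1+\dots+\alpha_{2n+1}\in\{\beta,-\beta\}$. $\Lambda^1_{\alpha_0}$ denotes the set of $\beta\in\Lambda^1$ connected with $\alpha_0$. *)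

theory Defs
  imports Complex_Main
begin

definition trilinear :: "('k::field \<Rightarrow> 'v::ab_group_add \<Rightarrow> 'v) \<Rightarrow> ('v \<Rightarrow> 'v \<Rightarrow> 'v \<Rightarrow> 'v) \<Rightarrow> bool" where
  "trilinear sT p \<longleftrightarrow>
     (\<forall>b c. Vector_Spaces.linear sT sT (\<lambda>a. p a b c)) \<and>
     (\<forall>a c. Vector_Spaces.linear sT sT (\<lambda>b. p a b c)) \<and>
     (\<forall>a b. Vector_Spaces.linear sT sT (\<lambda>c. p a b c))"

definition leibniz_triple_system ::
  "('k::field \<Rightarrow> 'v::ab_group_add \<Rightarrow> 'v) \<Rightarrow> ('v \<Rightarrow> 'v \<Rightarrow> 'v \<Rightarrow> 'v) \<Rightarrow> bool" where
  "leibniz_triple_system sT p \<longleftrightarrow>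
     vector_space sT \<and> trilinear sT p \<and>
     (\<forall>a b c d e. p a (p b c d) e =
        p (p a b c) d e - p (p a c b) d e - p (p a d b) c e + p (p a d c) b e) \<and>
     (\<forall>a b c d e. p a b (p c d e) =
        p (p a b c) d e - p (p a b d) c e - p (p a b e) c d + p (p a b e) d c)"

definition bilinear_map ::
  "('k::field \<Rightarrow> 'a::ab_group_add \<Rightarrow> 'a) \<Rightarrow> ('k \<Rightarrow> 'b::ab_group_add \<Rightarrow> 'b) \<Rightarrow>
   ('k \<Rightarrow> 'c::ab_group_add \<Rightarrow> 'c) \<Rightarrow> ('a \<Rightarrow> 'b \<Rightarrow> 'c) \<Rightarrow> bool" where
  "bilinear_map s1 s2 s3 f \<longleftrightarrow>
     (\<forall>y. Vector_Spaces.linear s1 s3 (\<lambda>x. f x y)) \<and>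
     (\<forall>x. Vector_Spaces.linear s2 s3 (\<lambda>y. f x y))"

text \<open>
  L^0 is a K-vector space (scalar multiplication sL) spanned by the symbols
  tens x y (= x \<otimes> y = [x,y]).  br0 is the product on L^0, actL the product
  L^0 x T -> T and actR the product T x L^0 -> T, so that on generators
  [x\<otimes>y, u\<otimes>v] = {x,y,u}\<otimes>v - {x,y,v}\<otimes>u,  [x\<otimes>y, w] = {x,y,w},
  [z, u\<otimes>v] = {z,u,v} - {z,v,u},  [z,w] = z\<otimes>w,
  and the total product on L = L^0 x T is a right Leibniz algebra.
\<close>

definition emb_prod ::
  "('l \<Rightarrow> 'l \<Rightarrow> 'l::ab_group_add) \<Rightarrow> ('v \<Rightarrow> 'v \<Rightarrow> 'l) \<Rightarrow> ('l \<Rightarrow> 'v \<Rightarrow> 'v::ab_group_add) \<Rightarrow>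
   ('v \<Rightarrow> 'l \<Rightarrow> 'v) \<Rightarrow> ('l \<times> 'v) \<Rightarrow> ('l \<times> 'v) \<Rightarrow> ('l \<times> 'v)" where
  "emb_prod br0 tens actL actR p q =
     (br0 (fst p) (fst q) + tens (snd p) (snd q),
      actL (fst p) (snd q) + actR (snd p) (fst q))"

definition pair_add :: "('l::plus \<times> 'v::plus) \<Rightarrow> ('l \<times> 'v) \<Rightarrow> ('l \<times> 'v)" where
  "pair_add p q = (fst p + fst q, snd p + snd q)"

definition standard_embedding ::
  "('k::field \<Rightarrow> 'v::ab_group_add \<Rightarrow> 'v) \<Rightarrow> ('k \<Rightarrow> 'l::ab_group_add \<Rightarrow> 'l) \<Rightarrow>
   ('v \<Rightarrow> 'v \<Rightarrow> 'v \<Rightarrow> 'v) \<Rightarrow> ('v \<Rightarrow> 'v \<Rightarrow> 'l) \<Rightarrow> ('l \<Rightarrow> 'l \<Rightarrow> 'l) \<Rightarrow>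
   ('l \<Rightarrow> 'v \<Rightarrow> 'v) \<Rightarrow> ('v \<Rightarrow> 'l \<Rightarrow> 'v) \<Rightarrow> bool" where
  "standard_embedding sT sL p tens br0 actL actR \<longleftrightarrow>
     vector_space sL \<and>
     bilinear_map sT sT sL tens \<and> bilinear_map sL sL sL br0 \<and>
     bilinear_map sL sT sT actL \<and> bilinear_map sT sL sT actR \<and>
     module.span sL {tens x y | x y. True} = UNIV \<and>
     (\<forall>x y u v. br0 (tens x y) (tens u v) = tens (p x y u) v - tens (p x y v) u) \<and>
     (\<forall>x y w. actL (tens x y) w = p x y w) \<and>
     (\<forall>z u v. actR z (tens u v) = p z u v - p z v u) \<and>
     (\<forall>a b c. emb_prod br0 tens actL actR (emb_prod br0 tens actL actR a b) c =
        pair_add (emb_prod br0 tens actL actR (emb_prod br0 tens actL actR a c) b)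
                 (emb_prod br0 tens actL actR a (emb_prod br0 tens actL actR b c)))"

definition abelian_subalgebra ::
  "('k::field \<Rightarrow> 'l::ab_group_add \<Rightarrow> 'l) \<Rightarrow> ('l \<Rightarrow> 'l \<Rightarrow> 'l) \<Rightarrow> 'l set \<Rightarrow> bool" where
  "abelian_subalgebra sL br0 H \<longleftrightarrow>
     module.subspace sL H \<and> (\<forall>x\<in>H. \<forall>y\<in>H. br0 x y \<in> H) \<and> (\<forall>x\<in>H. \<forall>y\<in>H. br0 x y = 0)"

definition maximal_abelian_subalgebra ::
  "('k::field \<Rightarrow> 'l::ab_group_add \<Rightarrow> 'l) \<Rightarrow> ('l \<Rightarrow> 'l \<Rightarrow> 'l) \<Rightarrow> 'l set \<Rightarrow> bool" where
  "maximal_abelian_subalgebra sL br0 H \<longleftrightarrow>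
     abelian_subalgebra sL br0 H \<and>
     (\<forall>H'. abelian_subalgebra sL br0 H' \<and> H \<subseteq> H' \<longrightarrow> H' = H)"

text \<open>Elements of the dual space (H^0)^*: linear functionals on H, represented
  as functions on L^0 that vanish outside H (so the representation is unique).\<close>
definition dual_space ::
  "('k::field \<Rightarrow> 'l::ab_group_add \<Rightarrow> 'l) \<Rightarrow> 'l set \<Rightarrow> ('l \<Rightarrow> 'k) set" where
  "dual_space sL H = {f. (\<forall>x\<in>H. \<forall>y\<in>H. f (x + y) = f x + f y) \<and>
                         (\<forall>c. \<forall>x\<in>H. f (sL c x) = c * f x) \<and>
                         (\<forall>x. x \<notin> H \<longrightarrow> f x = 0)}"

definition zero_fun :: "'l \<Rightarrow> 'k::field" where "zero_fun = (\<lambda>_. 0)"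
definition neg_fun :: "('l \<Rightarrow> 'k::field) \<Rightarrow> 'l \<Rightarrow> 'k" where "neg_fun f = (\<lambda>h. - f h)"
definition add_fun :: "('l \<Rightarrow> 'k::field) \<Rightarrow> ('l \<Rightarrow> 'k) \<Rightarrow> 'l \<Rightarrow> 'k" where
  "add_fun f g = (\<lambda>h. f h + g h)"

definition root_space_T ::
  "('k::field \<Rightarrow> 'v::ab_group_add \<Rightarrow> 'v) \<Rightarrow> ('v \<Rightarrow> 'l \<Rightarrow> 'v) \<Rightarrow> 'l set \<Rightarrow> ('l \<Rightarrow> 'k) \<Rightarrow> 'v set" where
  "root_space_T sT actR H a = {t. \<forall>h\<in>H. actR t h = sT (a h) t}"

definition root_space_L0 ::
  "('k::field \<Rightarrow> 'l::ab_group_add \<Rightarrow> 'l) \<Rightarrow> ('l \<Rightarrow> 'l \<Rightarrow> 'l) \<Rightarrow> 'l set \<Rightarrow> ('l \<Rightarrow> 'k) \<Rightarrow> 'l set" where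
  "root_space_L0 sL br0 H a = {v. \<forall>h\<in>H. br0 v h = sL (a h) v}"

definition roots1 ::
  "('k::field \<Rightarrow> 'v::ab_group_add \<Rightarrow> 'v) \<Rightarrow> ('k \<Rightarrow> 'l::ab_group_add \<Rightarrow> 'l) \<Rightarrow>
   ('v \<Rightarrow> 'l \<Rightarrow> 'v) \<Rightarrow> 'l set \<Rightarrow> ('l \<Rightarrow> 'k) set" where
  "roots1 sT sL actR H = {a \<in> dual_space sL H. a \<noteq> zero_fun \<and> root_space_T sT actR H a \<noteq> {0}}"

definition roots0 ::
  "('k::field \<Rightarrow> 'l::ab_group_add \<Rightarrow> 'l) \<Rightarrow> ('l \<Rightarrow> 'l \<Rightarrow> 'l) \<Rightarrow> 'l set \<Rightarrow> ('l \<Rightarrow> 'k) set" where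
  "roots0 sL br0 H = {a \<in> dual_space sL H. a \<noteq> zero_fun \<and> root_space_L0 sL br0 H a \<noteq> {0}}"

definition symmetric_set :: "('l \<Rightarrow> 'k::field) set \<Rightarrow> bool" where
  "symmetric_set R \<longleftrightarrow> (\<forall>a\<in>R. neg_fun a \<in> R)"

definition triple_nonzero :: "('v \<Rightarrow> 'v \<Rightarrow> 'v \<Rightarrow> 'v::zero) \<Rightarrow> 'v set \<Rightarrow> 'v set \<Rightarrow> 'v set \<Rightarrow> bool" where
  "triple_nonzero p A B C \<longleftrightarrow> (\<exists>x\<in>A. \<exists>y\<in>B. \<exists>z\<in>C. p x y z \<noteq> 0)"

definition split_LTS ::
  "('k::field \<Rightarrow> 'v::ab_group_add \<Rightarrow> 'v) \<Rightarrow> ('k \<Rightarrow> 'l::ab_group_add \<Rightarrow> 'l) \<Rightarrow>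
   ('v \<Rightarrow> 'v \<Rightarrow> 'v \<Rightarrow> 'v) \<Rightarrow> ('v \<Rightarrow> 'l \<Rightarrow> 'v) \<Rightarrow> 'l set \<Rightarrow> bool" where
  "split_LTS sT sL p actR H \<longleftrightarrow>
     module.span sT (\<Union>a \<in> roots1 sT sL actR H \<union> {zero_fun}. root_space_T sT actR H a) = UNIV \<and>
     \<not> triple_nonzero p (root_space_T sT actR H zero_fun) (root_space_T sT actR H zero_fun)
                        (root_space_T sT actR H zero_fun) \<and>
     (\<forall>a \<in> roots1 sT sL actR H.
        \<not> triple_nonzero p (root_space_T sT actR H a) (root_space_T sT actR H (neg_fun a))
                           (root_space_T sT actR H zero_fun))"

definition psum :: "(nat \<Rightarrow> 'l \<Rightarrow> 'k::field) \<Rightarrow> nat \<Rightarrow> 'l \<Rightarrow> 'k" where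
  "psum f k = (\<lambda>h. \<Sum>i\<in>{1..k}. f i h)"

definition connected_roots ::
  "('l \<Rightarrow> 'k::field) set \<Rightarrow> ('l \<Rightarrow> 'k) set \<Rightarrow> ('l \<Rightarrow> 'k) \<Rightarrow> ('l \<Rightarrow> 'k) \<Rightarrow> bool" where
  "connected_roots R1 R0 a b \<longleftrightarrow>
     (\<exists>(n::nat) (f :: nat \<Rightarrow> 'l \<Rightarrow> 'k).
        (\<forall>i\<in>{1..2*n+1}. f i \<in> R1 \<union> {zero_fun}) \<and>
        (\<forall>k\<in>{0..n}. psum f (2*k+1) \<in> R1) \<and>
        (\<forall>k\<in>{1..n}. psum f (2*k) \<in> R0) \<and>
        f 1 = a \<and>
        psum f (2*n+1) \<in> {b, neg_fun b})"

definition connected_class ::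
  "('l \<Rightarrow> 'k::field) set \<Rightarrow> ('l \<Rightarrow> 'k) set \<Rightarrow> ('l \<Rightarrow> 'k) \<Rightarrow> ('l \<Rightarrow> 'k) set" where
  "connected_class R1 R0 a0 = {b \<in> R1. connected_roots R1 R0 a0 b}"

end

theory Submission
  imports Defs "HOL-Library.Function_Algebras"
begin

(* Let x, y, z be root vectors of weights alpha, beta, gamma with {x,y,z} <> 0. In the standard
   embedding weights add, so x (x) y is a nonzero vector of L^0 of weight alpha + beta and {x,y,z}
   a nonzero vector of T of weight alpha + beta + gamma; hence alpha + beta is in Lambda^0 or zero
   and alpha + beta + gamma is in Lambda^1 or zero. The Leibniz identity
   {x,y,z} = {x,z,y} + [x, y (x) z] moreover makes x (x) z or y (x) z nonzero, so alpha + gamma or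
   beta + gamma is in Lambda^0 or zero. These relations alone put beta, gamma and the total weight
   into the connected class of alpha: a chain ending in +-v can be prolonged by two roots r, s
   whenever v + r is in Lambda^0 and v + r + s in Lambda^1, and the symmetry of Lambda^0 and
   Lambda^1 takes care of the signs. *)

lemma add_fun_eq_plus [simp]: "add_fun f g = f + g"
  by (simp add: add_fun_def plus_fun_def)

lemma neg_fun_eq_uminus [simp]: "neg_fun f = - f"
  by (simp add: neg_fun_def fun_Compl_def)

lemma zero_fun_eq_zero [simp]: "zero_fun = 0"
  by (simp add: Defs.zero_fun_def Function_Algebras.zero_fun_def)

lemma psum_Suc: "psum f (Suc m) = psum f m + f (Suc m)"
  by (simp add: psum_def plus_fun_def sum.cl_ivl_Suc)

lemma psum_cong: "(\<And>i. i \<le> k \<Longrightarrow> f i = g i) \<Longrightarrow> psum f k = psum g k"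
  unfolding psum_def by (intro ext sum.cong) auto

lemma symmetric_setD: "symmetric_set R \<Longrightarrow> a \<in> R \<Longrightarrow> - a \<in> R"
  by (simp add: symmetric_set_def)

lemma symmetric_set_insert_zeroD: "symmetric_set R \<Longrightarrow> a \<in> R \<union> {0} \<Longrightarrow> - a \<in> R \<union> {0}"
  by (auto simp: symmetric_set_def)

definition root_chain :: "('l \<Rightarrow> 'k::field) set \<Rightarrow> ('l \<Rightarrow> 'k) set \<Rightarrow> nat \<Rightarrow> (nat \<Rightarrow> 'l \<Rightarrow> 'k) \<Rightarrow> bool" where
  "root_chain R1 R0 n f \<longleftrightarrow>
     (\<forall>i\<in>{1..2*n+1}. f i \<in> R1 \<union> {0}) \<and>
     (\<forall>k\<in>{0..n}. psum f (2*k+1) \<in> R1) \<and>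
     (\<forall>k\<in>{1..n}. psum f (2*k) \<in> R0)"

lemma connected_roots_iff_root_chain:
  "connected_roots R1 R0 a b \<longleftrightarrow>
     (\<exists>n f. root_chain R1 R0 n f \<and> f 1 = a \<and> psum f (2*n+1) \<in> {b, - b})"
  by (simp add: connected_roots_def root_chain_def)

lemma root_chain_snoc:
  assumes chain: "root_chain R1 R0 n f"
    and r: "r \<in> R1 \<union> {0}" and s: "s \<in> R1 \<union> {0}"
    and R0: "psum f (2*n+1) + r \<in> R0" and R1: "psum f (2*n+1) + r + s \<in> R1"
  defines "g \<equiv> f(2*n+2 := r, 2*n+3 := s)"
  shows "root_chain R1 R0 (Suc n) g" "g 1 = f 1" "psum g (2 * Suc n + 1) = psum f (2*n+1) + r + s"
proof -
  have g_prefix: "psum g k = psum f k" if "k \<le> 2*n+1" for k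
    using that by (intro psum_cong) (auto simp: g_def)
  have g_even: "psum g (2 * Suc n) = psum f (2*n+1) + r"
    using psum_Suc[of g "2*n+1"] g_prefix[of "2*n+1"] by (simp add: g_def)
  show g_odd: "psum g (2 * Suc n + 1) = psum f (2*n+1) + r + s"
    using psum_Suc[of g "2 * Suc n"] g_even by (simp add: g_def)
  show "g 1 = f 1" by (simp add: g_def)
  have "psum g (2*k+1) \<in> R1" if "k \<le> Suc n" for k
    using that chain R1 g_odd g_prefix[of "2*k+1"]
    by (cases "k = Suc n") (auto simp: root_chain_def)
  moreover have "psum g (2*k) \<in> R0" if "1 \<le> k" "k \<le> Suc n" for k
    using that chain R0 g_even g_prefix[of "2*k"]
    by (cases "k = Suc n") (auto simp: root_chain_def)
  moreover have "g i \<in> R1 \<union> {0}" if "1 \<le> i" "i \<le> 2 * Suc n + 1" for i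
    using that chain r s by (auto simp: root_chain_def g_def)
  ultimately show "root_chain R1 R0 (Suc n) g"
    by (auto simp: root_chain_def)
qed

lemma connected_class_subset: "connected_class R1 R0 a0 \<subseteq> R1"
  by (auto simp: connected_class_def)

context
  fixes R1 R0 :: "('l \<Rightarrow> 'k::field) set"
  assumes sym1: "symmetric_set R1" and sym0: "symmetric_set R0"
begin

lemma connected_class_uminus:
  "v \<in> connected_class R1 R0 a0 \<Longrightarrow> - v \<in> connected_class R1 R0 a0"
  using symmetric_setD[OF sym1] by (auto simp: connected_class_def connected_roots_def)

lemma connected_class_extend:
  assumes v: "v \<in> connected_class R1 R0 a0"
    and r: "r \<in> R1 \<union> {0}" and s: "s \<in> R1 \<union> {0}"
    and vr: "v + r \<in> R0" and vrs: "v + r + s \<in> R1"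
  shows "v + r + s \<in> connected_class R1 R0 a0"
proof -
  from v obtain n f where chain: "root_chain R1 R0 n f" and start: "f 1 = a0"
    and ends: "psum f (2*n+1) \<in> {v, - v}"
    by (auto simp: connected_class_def connected_roots_iff_root_chain)
  have "connected_roots R1 R0 a0 (v + r + s)"
    using ends
  proof
    assume "psum f (2*n+1) = v"
    with root_chain_snoc[OF chain r s] vr vrs start show ?thesis
      unfolding connected_roots_iff_root_chain by blast
  next
    assume "psum f (2*n+1) \<in> {- v}"
    then have ends_neg: "psum f (2*n+1) = - v" by simp
    have neg_sums: "psum f (2*n+1) + - r \<in> R0" "psum f (2*n+1) + - r + - s \<in> R1"
      and sum_neg: "psum f (2*n+1) + - r + - s = - (v + r + s)"
      using ends_neg symmetric_setD[OF sym0 vr] symmetric_setD[OF sym1 vrs] by (simp_all add: algebra_simps)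
    from root_chain_snoc[OF chain symmetric_set_insert_zeroD[OF sym1 r]
        symmetric_set_insert_zeroD[OF sym1 s] neg_sums] sum_neg start
    have "\<exists>m g. root_chain R1 R0 m g \<and> g 1 = a0 \<and> psum g (2*m+1) = - (v + r + s)"
      by metis
    then show ?thesis
      unfolding connected_roots_iff_root_chain by blast
  qed
  with vrs show ?thesis by (simp add: connected_class_def)
qed

lemma connected_class_if_sum_in_R0:
  assumes al: "al \<in> connected_class R1 R0 a0" and g: "g \<in> R1" and sum: "al + g \<in> R0 \<union> {0}"
  shows "g \<in> connected_class R1 R0 a0"
proof (cases "al + g = 0")
  case True
  then have "g = - al" by (simp add: add_eq_0_iff)
  with connected_class_uminus[OF al] show ?thesis by simp
next
  case False
  have "- al \<in> R1" using symmetric_setD[OF sym1] al connected_class_subset by blast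
  with connected_class_extend[OF al, of g "- al"] g sum False show ?thesis by simp
qed

lemma connected_class_triple_R0:
  assumes al: "al \<in> connected_class R1 R0 a0" and b: "b \<in> R1 \<union> {0}" and c: "c \<in> R1 \<union> {0}"
    and ab: "al + b \<in> R0" and abc: "al + b + c \<in> R1 \<union> {0}"
  shows "b \<in> connected_class R1 R0 a0 \<union> {0}" "c \<in> connected_class R1 R0 a0 \<union> {0}"
    "al + b + c \<in> connected_class R1 R0 a0 \<union> {0}"
proof -
  show "b \<in> connected_class R1 R0 a0 \<union> {0}"
    using connected_class_if_sum_in_R0[OF al, of b] b ab by (cases "b = 0") simp_all
  show abc_C: "al + b + c \<in> connected_class R1 R0 a0 \<union> {0}"
    using connected_class_extend[OF al b c ab] abc by (cases "al + b + c = 0") simp_all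
  have "- c \<in> connected_class R1 R0 a0" if "c \<noteq> 0"
  proof (cases "al + b + c = 0")
    case True
    then have "al + b = - c" by (simp add: add_eq_0_iff)
    moreover have "- c \<in> R1" using symmetric_setD[OF sym1] c \<open>c \<noteq> 0\<close> by auto
    ultimately show ?thesis using connected_class_extend[OF al b _ ab, of 0] by simp
  next
    case False
    then have "al + b + c \<in> connected_class R1 R0 a0" using abc_C by simp
    moreover have "- c \<in> R1" using symmetric_setD[OF sym1] c \<open>c \<noteq> 0\<close> by auto
    moreover have "al + b + c + - c = al + b" by simp
    ultimately show ?thesis using connected_class_if_sum_in_R0[of "al + b + c" a0 "- c"] ab by simp
  qed
  then show "c \<in> connected_class R1 R0 a0 \<union> {0}"
    using connected_class_uminus[of "- c"] by (cases "c = 0") simp_all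
qed

lemma connected_class_triple:
  assumes al: "al \<in> connected_class R1 R0 a0" and b: "b \<in> R1 \<union> {0}" and c: "c \<in> R1 \<union> {0}"
    and ab: "al + b \<in> R0 \<union> {0}" and abc: "al + b + c \<in> R1 \<union> {0}"
    and ac_or_bc: "al + c \<in> R0 \<union> {0} \<or> b + c \<in> R0 \<union> {0}"
  shows "b \<in> connected_class R1 R0 a0 \<union> {0} \<and> c \<in> connected_class R1 R0 a0 \<union> {0}
    \<and> al + b + c \<in> connected_class R1 R0 a0 \<union> {0}"
proof (cases "al + b = 0")
  case True
  then have b_C: "b \<in> connected_class R1 R0 a0"
    using connected_class_uminus[OF al] by (simp add: add_eq_0_iff)
  have "c \<in> connected_class R1 R0 a0" if "c \<noteq> 0"
  proof -
    have "c \<in> R1" using c that by simp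
    then show ?thesis
      using ac_or_bc connected_class_if_sum_in_R0[OF al] connected_class_if_sum_in_R0[OF b_C] by blast
  qed
  with b_C True show ?thesis by auto
next
  case False
  with ab connected_class_triple_R0[OF al b c _ abc] show ?thesis by simp
qed

end

lemma bilinear_map_zero:
  assumes "bilinear_map s1 s2 s3 f"
  shows "f 0 y = 0" "f x 0 = 0"
  using assms unfolding bilinear_map_def linear_iff_module_hom by (auto intro: module_hom.zero)

lemma bilinear_map_scale:
  assumes "bilinear_map s1 s2 s3 f"
  shows "f (s1 r x) y = s3 r (f x y)" "f x (s2 r y) = s3 r (f x y)"
  using assms unfolding bilinear_map_def linear_iff_module_hom by (auto intro: module_hom.scale)

lemma dual_space_add: "f \<in> dual_space sL H \<Longrightarrow> g \<in> dual_space sL H \<Longrightarrow> f + g \<in> dual_space sL H"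
  by (simp add: dual_space_def distrib_left)

lemma roots1_subset_dual_space: "roots1 sT sL actR H \<union> {0} \<subseteq> dual_space sL H"
  by (auto simp: roots1_def dual_space_def)

lemma root_space_T_nonzero:
  "t \<in> root_space_T sT actR H mu \<Longrightarrow> t \<noteq> 0 \<Longrightarrow> mu \<in> dual_space sL H \<Longrightarrow>
   mu \<in> roots1 sT sL actR H \<union> {0}"
  by (auto simp: roots1_def)

lemma root_space_L0_nonzero:
  "w \<in> root_space_L0 sL br0 H mu \<Longrightarrow> w \<noteq> 0 \<Longrightarrow> mu \<in> dual_space sL H \<Longrightarrow>
   mu \<in> roots0 sL br0 H \<union> {0}"
  by (auto simp: roots0_def)

context
  fixes sT :: "'k::field \<Rightarrow> 'v::ab_group_add \<Rightarrow> 'v"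
    and sL :: "'k \<Rightarrow> 'l::ab_group_add \<Rightarrow> 'l"
    and p :: "'v \<Rightarrow> 'v \<Rightarrow> 'v \<Rightarrow> 'v"
    and tens :: "'v \<Rightarrow> 'v \<Rightarrow> 'l"
    and br0 :: "'l \<Rightarrow> 'l \<Rightarrow> 'l"
    and actL :: "'l \<Rightarrow> 'v \<Rightarrow> 'v"
    and actR :: "'v \<Rightarrow> 'l \<Rightarrow> 'v"
  assumes vector_space_T: "vector_space sT"
    and emb: "standard_embedding sT sL p tens br0 actL actR"
begin

lemma vector_space_L0: "vector_space sL"
  using emb by (simp add: standard_embedding_def)

lemma bilinear_tens: "bilinear_map sT sT sL tens"
  and bilinear_br0: "bilinear_map sL sL sL br0"
  and bilinear_actL: "bilinear_map sL sT sT actL"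
  and bilinear_actR: "bilinear_map sT sL sT actR"
  using emb by (simp_all add: standard_embedding_def)

lemma triple_eq_actL_tens: "p x y z = actL (tens x y) z"
  using emb by (simp add: standard_embedding_def)

lemma emb_prod_leibniz:
  "emb_prod br0 tens actL actR (emb_prod br0 tens actL actR a b) c =
     pair_add (emb_prod br0 tens actL actR (emb_prod br0 tens actL actR a c) b)
              (emb_prod br0 tens actL actR a (emb_prod br0 tens actL actR b c))"
  using emb unfolding standard_embedding_def by blast

lemmas bilinear_zeros = bilinear_map_zero[OF bilinear_tens] bilinear_map_zero[OF bilinear_br0]
  bilinear_map_zero[OF bilinear_actL] bilinear_map_zero[OF bilinear_actR]

lemma br0_tens_left: "br0 (tens x y) h = tens (actR x h) y + tens x (actR y h)"
  using arg_cong[OF emb_prod_leibniz[of "(0, x)" "(0, y)" "(h, 0)"], of fst]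
  by (simp add: emb_prod_def pair_add_def bilinear_zeros)

lemma actR_actL: "actR (actL w z) h = actL (br0 w h) z + actL w (actR z h)"
  using arg_cong[OF emb_prod_leibniz[of "(w, 0)" "(0, z)" "(h, 0)"], of snd]
  by (simp add: emb_prod_def pair_add_def bilinear_zeros)

lemma triple_eq_swap: "p x y z = p x z y + actR x (tens y z)"
  using arg_cong[OF emb_prod_leibniz[of "(0, x)" "(0, y)" "(0, z)"], of snd]
  by (simp add: emb_prod_def pair_add_def bilinear_zeros triple_eq_actL_tens)

lemma triple_nonzero_swap: "p x y z \<noteq> 0 \<Longrightarrow> p x z y \<noteq> 0 \<or> tens y z \<noteq> 0"
  using triple_eq_swap[of x y z] bilinear_zeros by auto

lemma triple_nonzero_tens: "p x y z \<noteq> 0 \<Longrightarrow> tens x y \<noteq> 0"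
  using bilinear_zeros by (auto simp: triple_eq_actL_tens)

lemma tens_mem_root_space_L0:
  assumes x: "x \<in> root_space_T sT actR H al" and y: "y \<in> root_space_T sT actR H be"
  shows "tens x y \<in> root_space_L0 sL br0 H (al + be)"
  unfolding root_space_L0_def
proof (intro CollectI ballI)
  fix h assume h: "h \<in> H"
  have "br0 (tens x y) h = tens (sT (al h) x) y + tens x (sT (be h) y)"
    using x y h by (simp add: br0_tens_left root_space_T_def)
  also have "\<dots> = sL (al h) (tens x y) + sL (be h) (tens x y)"
    by (simp add: bilinear_map_scale[OF bilinear_tens])
  also have "\<dots> = sL ((al + be) h) (tens x y)"
    by (simp add: vector_space.vector_space_assms(2)[OF vector_space_L0])
  finally show "br0 (tens x y) h = sL ((al + be) h) (tens x y)" .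
qed

lemma actL_mem_root_space_T:
  assumes w: "w \<in> root_space_L0 sL br0 H mu" and z: "z \<in> root_space_T sT actR H ga"
  shows "actL w z \<in> root_space_T sT actR H (mu + ga)"
  unfolding root_space_T_def
proof (intro CollectI ballI)
  fix h assume h: "h \<in> H"
  have "actR (actL w z) h = actL (sL (mu h) w) z + actL w (sT (ga h) z)"
    using w z h by (simp add: actR_actL root_space_T_def root_space_L0_def)
  also have "\<dots> = sT (mu h) (actL w z) + sT (ga h) (actL w z)"
    by (simp add: bilinear_map_scale[OF bilinear_actL])
  also have "\<dots> = sT ((mu + ga) h) (actL w z)"
    by (simp add: vector_space.vector_space_assms(2)[OF vector_space_T])
  finally show "actR (actL w z) h = sT ((mu + ga) h) (actL w z)" .
qed

lemma tens_nonzero_root_sum: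
  assumes "x \<in> root_space_T sT actR H al" "y \<in> root_space_T sT actR H be" "tens x y \<noteq> 0"
    and "al \<in> roots1 sT sL actR H \<union> {0}" "be \<in> roots1 sT sL actR H \<union> {0}"
  shows "al + be \<in> roots0 sL br0 H \<union> {0}"
proof -
  have "al + be \<in> dual_space sL H"
    using assms(4,5) roots1_subset_dual_space by (blast intro: dual_space_add)
  then show ?thesis
    using root_space_L0_nonzero[OF tens_mem_root_space_L0[OF assms(1,2)] assms(3)] by simp
qed

lemma triple_nonzero_root_sum:
  assumes "x \<in> root_space_T sT actR H al" "y \<in> root_space_T sT actR H be"
    "z \<in> root_space_T sT actR H ga" "p x y z \<noteq> 0"
    and "al \<in> roots1 sT sL actR H \<union> {0}" "be \<in> roots1 sT sL actR H \<union> {0}"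
    "ga \<in> roots1 sT sL actR H \<union> {0}"
  shows "al + be + ga \<in> roots1 sT sL actR H \<union> {0}"
proof -
  have "p x y z \<in> root_space_T sT actR H (al + be + ga)"
    using actL_mem_root_space_T[OF tens_mem_root_space_L0 assms(3)] assms(1,2)
    by (simp add: triple_eq_actL_tens)
  moreover have "al + be + ga \<in> dual_space sL H"
    using assms(5-7) roots1_subset_dual_space by (blast intro: dual_space_add)
  ultimately show ?thesis
    using root_space_T_nonzero assms(4) by blast
qed

context
  fixes H :: "'l set"
  assumes sym1: "symmetric_set (roots1 sT sL actR H)"
    and sym0: "symmetric_set (roots0 sL br0 H)"
begin

lemma connected_class_triple_left:
  assumes a: "a \<in> connected_class (roots1 sT sL actR H) (roots0 sL br0 H) a0"
    and b: "b \<in> roots1 sT sL actR H \<union> {0}" and c: "c \<in> roots1 sT sL actR H \<union> {0}"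
    and x: "x \<in> root_space_T sT actR H a" and y: "y \<in> root_space_T sT actR H b"
    and z: "z \<in> root_space_T sT actR H c" and nz: "p x y z \<noteq> 0"
  shows "b \<in> connected_class (roots1 sT sL actR H) (roots0 sL br0 H) a0 \<union> {0}
    \<and> c \<in> connected_class (roots1 sT sL actR H) (roots0 sL br0 H) a0 \<union> {0}
    \<and> a + b + c \<in> connected_class (roots1 sT sL actR H) (roots0 sL br0 H) a0 \<union> {0}"
proof -
  have a1: "a \<in> roots1 sT sL actR H \<union> {0}"
    using a connected_class_subset by blast
  have "a + c \<in> roots0 sL br0 H \<union> {0} \<or> b + c \<in> roots0 sL br0 H \<union> {0}"
    using triple_nonzero_swap[OF nz] triple_nonzero_tens tens_nonzero_root_sum[OF x z _ a1 c] tens_nonzero_root_sum[OF y z _ b c]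
    by blast
  with connected_class_triple[OF sym1 sym0 a b c tens_nonzero_root_sum[OF x y triple_nonzero_tens[OF nz] a1 b]
      triple_nonzero_root_sum[OF x y z nz a1 b c]]
  show ?thesis .
qed

lemma connected_class_triple_middle:
  assumes a: "a \<in> connected_class (roots1 sT sL actR H) (roots0 sL br0 H) a0"
    and b: "b \<in> roots1 sT sL actR H \<union> {0}" and c: "c \<in> roots1 sT sL actR H \<union> {0}"
    and y: "y \<in> root_space_T sT actR H b" and x: "x \<in> root_space_T sT actR H a"
    and z: "z \<in> root_space_T sT actR H c" and nz: "p y x z \<noteq> 0"
  shows "b \<in> connected_class (roots1 sT sL actR H) (roots0 sL br0 H) a0 \<union> {0}
    \<and> c \<in> connected_class (roots1 sT sL actR H) (roots0 sL br0 H) a0 \<union> {0}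
    \<and> b + a + c \<in> connected_class (roots1 sT sL actR H) (roots0 sL br0 H) a0 \<union> {0}"
proof -
  have a1: "a \<in> roots1 sT sL actR H \<union> {0}"
    using a connected_class_subset by blast
  have "a + c \<in> roots0 sL br0 H \<union> {0} \<or> b + c \<in> roots0 sL br0 H \<union> {0}"
    using triple_nonzero_swap[OF nz] triple_nonzero_tens tens_nonzero_root_sum[OF x z _ a1 c] tens_nonzero_root_sum[OF y z _ b c]
    by blast
  moreover have "a + b \<in> roots0 sL br0 H \<union> {0}"
    using tens_nonzero_root_sum[OF y x triple_nonzero_tens[OF nz] b a1] by (simp add: add.commute)
  moreover have "a + b + c \<in> roots1 sT sL actR H \<union> {0}"
    using triple_nonzero_root_sum[OF y x z nz b a1 c] by (simp add: add.commute)
  ultimately show ?thesis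
    using connected_class_triple[OF sym1 sym0 a b c] by (simp add: add.commute)
qed

lemma connected_class_triple_right:
  assumes a: "a \<in> connected_class (roots1 sT sL actR H) (roots0 sL br0 H) a0"
    and b: "b \<in> roots1 sT sL actR H \<union> {0}" and c: "c \<in> roots1 sT sL actR H \<union> {0}"
    and y: "y \<in> root_space_T sT actR H b" and z: "z \<in> root_space_T sT actR H c"
    and x: "x \<in> root_space_T sT actR H a" and nz: "p y z x \<noteq> 0"
  shows "b \<in> connected_class (roots1 sT sL actR H) (roots0 sL br0 H) a0 \<union> {0}
    \<and> c \<in> connected_class (roots1 sT sL actR H) (roots0 sL br0 H) a0 \<union> {0}
    \<and> b + c + a \<in> connected_class (roots1 sT sL actR H) (roots0 sL br0 H) a0 \<union> {0}"
  using triple_nonzero_swap[OF nz]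
proof
  assume "p y x z \<noteq> 0"
  from connected_class_triple_middle[OF a b c y x z this] show ?thesis
    by (simp add: ac_simps)
next
  assume zx: "tens z x \<noteq> 0"
  have a1: "a \<in> roots1 sT sL actR H \<union> {0}"
    using a connected_class_subset by blast
  have "a + c \<in> roots0 sL br0 H \<union> {0}"
    using tens_nonzero_root_sum[OF z x zx c a1] by (simp add: add.commute)
  moreover have "a + c + b \<in> roots1 sT sL actR H \<union> {0}"
    using triple_nonzero_root_sum[OF y z x nz b c a1] by (simp add: ac_simps)
  moreover have "c + b \<in> roots0 sL br0 H \<union> {0}"
    using tens_nonzero_root_sum[OF y z triple_nonzero_tens[OF nz] b c] by (simp add: add.commute)
  ultimately show ?thesis
    using connected_class_triple[OF sym1 sym0 a c b] by (simp add: ac_simps)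
qed

end

end

theorem lemma3p3:
  fixes sT :: "'k::field \<Rightarrow> 'v::ab_group_add \<Rightarrow> 'v"
    and sL :: "'k \<Rightarrow> 'l::ab_group_add \<Rightarrow> 'l"
    and p :: "'v \<Rightarrow> 'v \<Rightarrow> 'v \<Rightarrow> 'v"
    and tens :: "'v \<Rightarrow> 'v \<Rightarrow> 'l"
    and br0 :: "'l \<Rightarrow> 'l \<Rightarrow> 'l"
    and actL :: "'l \<Rightarrow> 'v \<Rightarrow> 'v"
    and actR :: "'v \<Rightarrow> 'l \<Rightarrow> 'v"
    and H :: "'l set"
    and a0 a b c :: "'l \<Rightarrow> 'k"
  assumes lts: "leibniz_triple_system sT p"
    and emb: "standard_embedding sT sL p tens br0 actL actR"
    and H: "maximal_abelian_subalgebra sL br0 H"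
    and split: "split_LTS sT sL p actR H"
    and sym1: "symmetric_set (roots1 sT sL actR H)"
    and sym0: "symmetric_set (roots0 sL br0 H)"
    and a0: "a0 \<in> roots1 sT sL actR H"
    and a: "a \<in> connected_class (roots1 sT sL actR H) (roots0 sL br0 H) a0"
    and b: "b \<in> roots1 sT sL actR H \<union> {zero_fun}"
    and c: "c \<in> roots1 sT sL actR H \<union> {zero_fun}"
  shows
    "(triple_nonzero p (root_space_T sT actR H a) (root_space_T sT actR H b) (root_space_T sT actR H c)
        \<longrightarrow> b \<in> connected_class (roots1 sT sL actR H) (roots0 sL br0 H) a0 \<union> {zero_fun}
          \<and> c \<in> connected_class (roots1 sT sL actR H) (roots0 sL br0 H) a0 \<union> {zero_fun}
          \<and> add_fun (add_fun a b) c \<in> connected_class (roots1 sT sL actR H) (roots0 sL br0 H) a0 \<union> {zero_fun})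
   \<and> (triple_nonzero p (root_space_T sT actR H b) (root_space_T sT actR H a) (root_space_T sT actR H c)
        \<longrightarrow> b \<in> connected_class (roots1 sT sL actR H) (roots0 sL br0 H) a0 \<union> {zero_fun}
          \<and> c \<in> connected_class (roots1 sT sL actR H) (roots0 sL br0 H) a0 \<union> {zero_fun}
          \<and> add_fun (add_fun b a) c \<in> connected_class (roots1 sT sL actR H) (roots0 sL br0 H) a0 \<union> {zero_fun})
   \<and> (triple_nonzero p (root_space_T sT actR H b) (root_space_T sT actR H c) (root_space_T sT actR H a)
        \<longrightarrow> b \<in> connected_class (roots1 sT sL actR H) (roots0 sL br0 H) a0 \<union> {zero_fun}
          \<and> c \<in> connected_class (roots1 sT sL actR H) (roots0 sL br0 H) a0 \<union> {zero_fun}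
          \<and> add_fun (add_fun b c) a \<in> connected_class (roots1 sT sL actR H) (roots0 sL br0 H) a0 \<union> {zero_fun})"
  proof -
  have vector_space_T: "vector_space sT"
    using lts by (simp add: leibniz_triple_system_def)
  have b': "b \<in> roots1 sT sL actR H \<union> {0}" and c': "c \<in> roots1 sT sL actR H \<union> {0}"
    using b c by simp_all
  note closed = vector_space_T emb sym1 sym0 a b' c'
  show ?thesis
    unfolding triple_nonzero_def add_fun_eq_plus zero_fun_eq_zero
    using connected_class_triple_left[OF closed] connected_class_triple_middle[OF closed]
      connected_class_triple_right[OF closed]
    by blast
qed

end
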